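(* In the standing local setup, the Chern curvature $F^r{}_\alpha=-\partial_{\bar z}(g^{r\bar\delta}\partial_z g_{\alpha\bar\delta})$ of the bundles $f^*T^{1,0}M$ (with metric $g_{\alpha\bar\beta}$) over all leaves vanishes identically if and only if $\partial\eta^\alpha/\partial\bar w_\beta\equiv0$ for all $\alpha,\beta$, i.e. if and only if for every $z$ the leaf vector field $X(z,\cdot)$ is a holomorphic vector field on $M$ (the foliation by leaves is holomorphic).
   Context: Standing local setup: $(M,\omega_0)$ is a Kähler manifold of complex dimension $n$, $\Sigma\subset\mathbb C$ a domain with coordinate $z$, and $\phi$ a smooth real function on $\Sigma\times M$ such that $\omega_\phi=\omega_0+\sqrt{-1}\partial\bar\partial_M\phi(z,\cdot)>0$ on $M$ for each $z$ and $(\pi_2^*\omega_0+\sqrt{-1}\partial\bar\partial\phi)^{n+1}=0$ on $\Sigma\times M$. In local holomorphic coordinates $w=(w_1,\dots,w_n)$ on $M$ write $g_{\alpha\bar\beta}=g_{0,\alpha\bar\beta}+\partial^2\phi/\partial w_\alpha\partial\bar w_\beta$ (the metric of $\omega_\phi$), $(g^{\alpha\bar\beta})$ its inverse, $\eta^\alpha=-g^{\alpha\bar\beta}\,\partial^2\phi/\partial z\partial\bar w_\beta$, $\eta^{\bar\alpha}=\overline{\eta^\alpha}$, $X=\eta^\alpha\partial/\partial w_\alpha$ (leaf vector field; $\partial/\partial z+X$ spans the kernel of $\pi_2^*\omega_0+\sqrt{-1}\partial\bar\partial\phi$), $\partial_z=\partial/\partial z+\eta^\alpha\partial/\partial w_\alpha$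 and $\overline{\partial_z}=\partial/\partial\bar z+\eta^{\bar\alpha}\partial/\partial\bar w_\alpha$; summation over repeated indices. Integral curves of $\partial_z$ are holomorphic curves $z\mapsto(z,f(z))$ with $f'=\eta$ (the leaves). *)

theory Defs
  imports "HOL-Analysis.Analysis"
begin

text \<open>Local coordinates on the product \<open>Sigma \<times> M\<close>: a point is \<open>(z, w)\<close> with
  \<open>z \<in> \<complex>\<close> and \<open>w \<in> \<complex>^n\<close>, the index type \<open>'n\<close> enumerating \<open>w_1, ..., w_n\<close>.
  Coordinates of the product are indexed by \<open>'n option\<close>: \<open>None\<close> is \<open>z\<close>, \<open>Some a\<close> is \<open>w_a\<close>.\<close>

type_synonym 'n pt = "complex \<times> (complex^'n)"

fun dd :: "'a::real_normed_vector list \<Rightarrow> ('a \<Rightarrow> 'b::real_normed_vector) \<Rightarrow> 'a \<Rightarrow> 'b" where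
  "dd [] f = f"
| "dd (v # vs) f = (\<lambda>p. frechet_derivative (dd vs f) (at p) v)"

definition smooth_on :: "'a::real_normed_vector set \<Rightarrow> ('a \<Rightarrow> 'b::real_normed_vector) \<Rightarrow> bool" where
  "smooth_on S f \<longleftrightarrow> (\<forall>vs. \<forall>p\<in>S. dd vs f differentiable (at p))"

definition rdir :: "'n option \<Rightarrow> 'n::finite pt" where
  "rdir k = (case k of None \<Rightarrow> (1, 0) | Some a \<Rightarrow> (0, axis a 1))"

definition idir :: "'n option \<Rightarrow> 'n::finite pt" where
  "idir k = (case k of None \<Rightarrow> (\<i>, 0) | Some a \<Rightarrow> (0, axis a \<i>))"

definition wirt :: "'n option \<Rightarrow> ('n::finite pt \<Rightarrow> complex) \<Rightarrow> 'n pt \<Rightarrow> complex" where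
  "wirt k f p = (frechet_derivative f (at p) (rdir k) - \<i> * frechet_derivative f (at p) (idir k)) / 2"

definition wirt_bar :: "'n option \<Rightarrow> ('n::finite pt \<Rightarrow> complex) \<Rightarrow> 'n pt \<Rightarrow> complex" where
  "wirt_bar k f p = (frechet_derivative f (at p) (rdir k) + \<i> * frechet_derivative f (at p) (idir k)) / 2"

definition herm_pos :: "complex^'n^'n \<Rightarrow> bool" where
  "herm_pos A \<longleftrightarrow> (\<forall>i j. A $ j $ i = cnj (A $ i $ j)) \<and>
     (\<forall>v::complex^'n. v \<noteq> 0 \<longrightarrow> Re (\<Sum>i\<in>UNIV. \<Sum>j\<in>UNIV. A $ i $ j * v $ i * cnj (v $ j)) > 0)"

definition phic :: "('n::finite pt \<Rightarrow> real) \<Rightarrow> 'n pt \<Rightarrow> complex" where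
  "phic phi = (\<lambda>p. complex_of_real (phi p))"

definition gmet :: "(complex^'n \<Rightarrow> complex^'n^'n) \<Rightarrow> ('n::finite pt \<Rightarrow> real) \<Rightarrow> 'n pt \<Rightarrow> complex^'n^'n" where
  "gmet g0 phi p = (\<chi> a b. g0 (snd p) $ a $ b + wirt (Some a) (wirt_bar (Some b) (phic phi)) p)"

text \<open>Inverse \<open>g^{a bbar}\<close>, normalised by \<open>g^{a bbar} g_{c bbar} = \<delta>^a_c\<close>.\<close>
definition ginv :: "(complex^'n \<Rightarrow> complex^'n^'n) \<Rightarrow> ('n::finite pt \<Rightarrow> real) \<Rightarrow> 'n pt \<Rightarrow> complex^'n^'n" where
  "ginv g0 phi p = matrix_inv (transpose (gmet g0 phi p))"

definition eta :: "(complex^'n \<Rightarrow> complex^'n^'n) \<Rightarrow> ('n::finite pt \<Rightarrow> real) \<Rightarrow> 'n \<Rightarrow> 'n pt \<Rightarrow> complex" where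
  "eta g0 phi a p = - (\<Sum>b\<in>UNIV. ginv g0 phi p $ a $ b * wirt None (wirt_bar (Some b) (phic phi)) p)"

definition Dz :: "(complex^'n \<Rightarrow> complex^'n^'n) \<Rightarrow> ('n::finite pt \<Rightarrow> real) \<Rightarrow> ('n pt \<Rightarrow> complex) \<Rightarrow> 'n pt \<Rightarrow> complex" where
  "Dz g0 phi h p = wirt None h p + (\<Sum>c\<in>UNIV. eta g0 phi c p * wirt (Some c) h p)"

definition Dzb :: "(complex^'n \<Rightarrow> complex^'n^'n) \<Rightarrow> ('n::finite pt \<Rightarrow> real) \<Rightarrow> ('n pt \<Rightarrow> complex) \<Rightarrow> 'n pt \<Rightarrow> complex" where
  "Dzb g0 phi h p = wirt_bar None h p + (\<Sum>c\<in>UNIV. cnj (eta g0 phi c p) * wirt_bar (Some c) h p)"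

definition curv :: "(complex^'n \<Rightarrow> complex^'n^'n) \<Rightarrow> ('n::finite pt \<Rightarrow> real) \<Rightarrow> 'n \<Rightarrow> 'n \<Rightarrow> 'n pt \<Rightarrow> complex" where
  "curv g0 phi r a p = - Dzb g0 phi
     (\<lambda>q. \<Sum>d\<in>UNIV. ginv g0 phi q $ r $ d * Dz g0 phi (\<lambda>q'. gmet g0 phi q' $ a $ d) q) p"

text \<open>Coefficient matrix of \<open>pi_2^* omega_0 + i \<partial>\<partial>bar phi\<close> on the product, indexed by \<open>'n option\<close>;
  its \<open>(n+1)\<close>-st power is a nonzero constant times its determinant times the volume form.\<close>
definition cmat :: "(complex^'n \<Rightarrow> complex^'n^'n) \<Rightarrow> ('n::finite pt \<Rightarrow> real) \<Rightarrow> 'n pt \<Rightarrow> complex^('n option)^('n option)" where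
  "cmat g0 phi p = (\<chi> i j. (case (i, j) of (Some a, Some b) \<Rightarrow> g0 (snd p) $ a $ b | _ \<Rightarrow> 0)
                       + wirt i (wirt_bar j (phic phi)) p)"

end

theory Submission
  imports Defs
begin

text \<open>Write \<open>A\<^sub>c\<^sup>r = \<partial>\<eta>\<^sup>r/\<partial>wbar\<^sub>c\<close> and \<open>\<psi>\<^sub>b = \<partial>\<^sup>2\<phi>/\<partial>z\<partial>wbar\<^sub>b\<close>. The definition of \<open>\<eta>\<close> says
  \<open>\<psi>\<^sub>b = - g\<^sub>a\<^sub>b \<eta>\<^sup>a\<close>, and the degenerate Monge-Ampere equation says
  \<open>\<partial>\<^sup>2\<phi>/\<partial>z\<partial>zbar = g\<^sub>a\<^sub>b \<eta>\<^sup>a conj(\<eta>\<^sup>b)\<close>. Differentiating both identities along the leaves shows that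
  \<open>\<eta>\<close> is annihilated by \<^const>\<open>Dzb\<close>: the leaves are holomorphic. Together with the Kaehler symmetry
  of \<open>g\<close> this turns the curvature into \<open>F\<^sup>r\<^sub>a = - conj(A\<^sub>a\<^sup>c) A\<^sub>c\<^sup>r\<close>, while \<open>g\<^sub>r\<^sub>d A\<^sub>c\<^sup>r\<close> is symmetric
  in \<open>c, d\<close> because third derivatives of \<open>\<phi>\<close> commute. Hence if \<open>F = 0\<close>, the \<open>g\<close>-norm
  \<open>g\<^sub>r\<^sub>c conj(A\<^sub>c\<^sup>d) A\<^sub>d\<^sup>r\<close> of every row of \<open>A\<close> vanishes and \<open>A = 0\<close>; the converse is immediate from
  the formula for \<open>F\<close>.\<close>

section \<open>Directional derivatives and smooth functions\<close>

definition dderiv :: "'a::real_normed_vector \<Rightarrow> ('a \<Rightarrow> complex) \<Rightarrow> 'a \<Rightarrow> complex" where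
  "dderiv v f p = frechet_derivative f (at p) v"

lemma dderiv_cong:
  assumes "open S" "p \<in> S" "\<And>q. q \<in> S \<Longrightarrow> f q = g q"
  shows "dderiv v f p = dderiv v g p"
proof -
  have "(f has_derivative F) (at p) \<longleftrightarrow> (g has_derivative F) (at p)" for F
    using has_derivative_transform_within_open[OF _ assms(1,2)] assms(3) by metis
  then show ?thesis unfolding dderiv_def frechet_derivative_def by simp
qed

lemma has_derivative_dderiv:
  "f differentiable (at p) \<Longrightarrow> (f has_derivative (\<lambda>v. dderiv v f p)) (at p)"
  unfolding dderiv_def by (metis frechet_derivative_works)

lemma dderiv_eq: "(f has_derivative F) (at p) \<Longrightarrow> dderiv v f p = F v"
  unfolding dderiv_def by (metis frechet_derivative_at)

lemma dderiv_const: "dderiv v (\<lambda>q. c) p = 0"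
  by (rule dderiv_eq) (rule has_derivative_const)

lemma dderiv_add:
  "f differentiable (at p) \<Longrightarrow> g differentiable (at p) \<Longrightarrow>
    dderiv v (\<lambda>q. f q + g q) p = dderiv v f p + dderiv v g p"
  by (rule dderiv_eq) (intro has_derivative_add has_derivative_dderiv)

lemma dderiv_mult:
  "f differentiable (at p) \<Longrightarrow> g differentiable (at p) \<Longrightarrow>
    dderiv v (\<lambda>q. f q * g q) p = f p * dderiv v g p + dderiv v f p * g p"
  by (rule dderiv_eq) (intro has_derivative_mult has_derivative_dderiv)

lemma dderiv_sum:
  "(\<And>i. i \<in> A \<Longrightarrow> f i differentiable (at p)) \<Longrightarrow>
    dderiv v (\<lambda>q. \<Sum>i\<in>A. f i q) p = (\<Sum>i\<in>A. dderiv v (f i) p)"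
  by (rule dderiv_eq) (intro has_derivative_sum has_derivative_dderiv)

lemma dderiv_cnj:
  "f differentiable (at p) \<Longrightarrow> dderiv v (\<lambda>q. cnj (f q)) p = cnj (dderiv v f p)"
  by (rule dderiv_eq) (intro has_derivative_cnj has_derivative_dderiv)

lemma dderiv_scaleR:
  "f differentiable (at p) \<Longrightarrow> dderiv (h *\<^sub>R v) f p = h *\<^sub>R dderiv v f p"
  using linear_cmul[OF has_derivative_linear[OF has_derivative_dderiv]] by blast

lemma has_vector_derivative_dderiv_line:
  assumes "f differentiable (at (q + t *\<^sub>R v))"
  shows "((\<lambda>s. f (q + s *\<^sub>R v)) has_vector_derivative dderiv v f (q + t *\<^sub>R v)) (at t)"
proof -
  have "((\<lambda>s. q + s *\<^sub>R v) has_derivative (\<lambda>h. h *\<^sub>R v)) (at t)"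
    by (auto intro!: derivative_eq_intros)
  from has_derivative_compose[OF this has_derivative_dderiv[OF assms]] show ?thesis
    unfolding has_vector_derivative_def dderiv_scaleR[OF assms] o_def .
qed

lemma dd_Cons: "dd (v # vs) f = dderiv v (dd vs f)"
  by (simp add: dderiv_def fun_eq_iff)

lemma smooth_on_dderiv: "smooth_on S f \<Longrightarrow> smooth_on S (dderiv v f)"
proof -
  have "dd vs (dderiv v f) = dd (vs @ [v]) f" for vs
    by (induction vs) (simp_all add: dd_Cons del: dd.simps(2))
  then show "smooth_on S f \<Longrightarrow> smooth_on S (dderiv v f)"
    unfolding smooth_on_def by metis
qed

lemma smooth_on_imp_differentiable: "smooth_on S f \<Longrightarrow> p \<in> S \<Longrightarrow> f differentiable (at p)"
  unfolding smooth_on_def by (metis dd.simps(1))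

text \<open>Closure of \<^const>\<open>smooth_on\<close> under the field operations is proved through this inductive
  set: by induction, each member is differentiable and all its directional derivatives are members.\<close>

inductive_set smooth_fns :: "'a::real_normed_vector set \<Rightarrow> ('a \<Rightarrow> complex) set" for S where
  smooth_fns_base: "smooth_on S f \<Longrightarrow> f \<in> smooth_fns S"
| smooth_fns_inverse: "f \<in> smooth_fns S \<Longrightarrow> (\<forall>p\<in>S. f p \<noteq> 0) \<Longrightarrow> (\<lambda>p. inverse (f p)) \<in> smooth_fns S"
| smooth_fns_const: "(\<lambda>p. c) \<in> smooth_fns S"
| smooth_fns_add: "f \<in> smooth_fns S \<Longrightarrow> g \<in> smooth_fns S \<Longrightarrow> (\<lambda>p. f p + g p) \<in> smooth_fns S"
| smooth_fns_mult: "f \<in> smooth_fns S \<Longrightarrow> g \<in> smooth_fns S \<Longrightarrow> (\<lambda>p. f p * g p) \<in> smooth_fns S"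
| smooth_fns_cnj: "f \<in> smooth_fns S \<Longrightarrow> (\<lambda>p. cnj (f p)) \<in> smooth_fns S"
| smooth_fns_cong: "f \<in> smooth_fns S \<Longrightarrow> (\<forall>p\<in>S. g p = f p) \<Longrightarrow> g \<in> smooth_fns S"

lemma smooth_fns_minus: "f \<in> smooth_fns S \<Longrightarrow> (\<lambda>p. - f p) \<in> smooth_fns S"
  by (rule smooth_fns_cong[OF smooth_fns_mult[OF smooth_fns_const[of "-1"]]]) auto

lemma smooth_fns_derivativeI:
  assumes "\<And>p. p \<in> S \<Longrightarrow> (f has_derivative (\<lambda>v. D v p)) (at p)"
    and "\<And>v. D v \<in> smooth_fns S"
  shows "(\<forall>p\<in>S. f differentiable (at p)) \<and> (\<forall>v. dderiv v f \<in> smooth_fns S)"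
  using assms by (metis differentiableI dderiv_eq smooth_fns_cong)

lemma smooth_fns_differentiable_dderiv:
  assumes S: "open S" and "f \<in> smooth_fns S"
  shows "(\<forall>p\<in>S. f differentiable (at p)) \<and> (\<forall>v. dderiv v f \<in> smooth_fns S)"
  using assms(2)
proof induction
  case (smooth_fns_base f)
  then show ?case
    by (simp add: smooth_on_imp_differentiable smooth_on_dderiv smooth_fns.smooth_fns_base)
next
  case (smooth_fns_inverse f)
  have "((\<lambda>p. inverse (f p)) has_derivative (\<lambda>v. - (inverse (f p) * dderiv v f p * inverse (f p)))) (at p)"
    if "p \<in> S" for p
    using smooth_fns_inverse that by (intro Deriv.has_derivative_inverse has_derivative_dderiv) auto
  moreover have "(\<lambda>p. - (inverse (f p) * dderiv v f p * inverse (f p))) \<in> smooth_fns S" for v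
    using smooth_fns_inverse
    by (intro smooth_fns_minus smooth_fns_mult smooth_fns.smooth_fns_inverse) auto
  ultimately show ?case
    by (rule smooth_fns_derivativeI)
next
  case (smooth_fns_const c)
  then show ?case
    by (intro smooth_fns_derivativeI[where D = "\<lambda>v p. 0"]) (auto intro: smooth_fns.smooth_fns_const)
next
  case (smooth_fns_add f g)
  then show ?case
    by (intro smooth_fns_derivativeI[where D = "\<lambda>v p. dderiv v f p + dderiv v g p"])
      (auto intro!: has_derivative_add has_derivative_dderiv smooth_fns.smooth_fns_add)
next
  case (smooth_fns_mult f g)
  have "((\<lambda>p. f p * g p) has_derivative (\<lambda>v. f p * dderiv v g p + dderiv v f p * g p)) (at p)"
    if "p \<in> S" for p
    using smooth_fns_mult that by (intro has_derivative_mult has_derivative_dderiv) auto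
  moreover have "(\<lambda>p. f p * dderiv v g p + dderiv v f p * g p) \<in> smooth_fns S" for v
    using smooth_fns_mult by (intro smooth_fns.smooth_fns_add smooth_fns.smooth_fns_mult) auto
  ultimately show ?case
    by (rule smooth_fns_derivativeI)
next
  case (smooth_fns_cnj f)
  then show ?case
    by (intro smooth_fns_derivativeI[where D = "\<lambda>v p. cnj (dderiv v f p)"])
      (auto intro!: has_derivative_cnj has_derivative_dderiv smooth_fns.smooth_fns_cnj)
next
  case (smooth_fns_cong f g)
  have "(g has_derivative (\<lambda>v. dderiv v f p)) (at p)" if p: "p \<in> S" for p
  proof (rule has_derivative_transform_within_open[OF _ S p])
    show "(f has_derivative (\<lambda>v. dderiv v f p)) (at p)"
      using smooth_fns_cong.IH p by (blast intro: has_derivative_dderiv)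
    show "\<And>q. q \<in> S \<Longrightarrow> f q = g q" using smooth_fns_cong.hyps(2) by simp
  qed
  moreover have "dderiv v f \<in> smooth_fns S" for v using smooth_fns_cong.IH by blast
  ultimately show ?case
    by (rule smooth_fns_derivativeI)
qed

lemma smooth_on_iff_smooth_fns:
  assumes "open S"
  shows "smooth_on S f \<longleftrightarrow> f \<in> smooth_fns S"
proof
  assume "f \<in> smooth_fns S"
  then have "dd vs f \<in> smooth_fns S" for vs
    by (induction vs) (simp_all add: dd_Cons smooth_fns_differentiable_dderiv[OF assms] del: dd.simps(2))
  then show "smooth_on S f"
    unfolding smooth_on_def using smooth_fns_differentiable_dderiv[OF assms] by blast
qed (rule smooth_fns_base)

context
  fixes S :: "'a::real_normed_vector set"
  assumes S: "open S"
begin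

lemma smooth_on_const: "smooth_on S (\<lambda>p. c :: complex)"
  by (simp add: smooth_on_iff_smooth_fns[OF S] smooth_fns_const)

lemma smooth_on_add:
  fixes f g :: "'a \<Rightarrow> complex"
  shows "smooth_on S f \<Longrightarrow> smooth_on S g \<Longrightarrow> smooth_on S (\<lambda>p. f p + g p)"
  by (simp add: smooth_on_iff_smooth_fns[OF S] smooth_fns_add)

lemma smooth_on_mult:
  fixes f g :: "'a \<Rightarrow> complex"
  shows "smooth_on S f \<Longrightarrow> smooth_on S g \<Longrightarrow> smooth_on S (\<lambda>p. f p * g p)"
  by (simp add: smooth_on_iff_smooth_fns[OF S] smooth_fns_mult)

lemma smooth_on_cnj:
  fixes f :: "'a \<Rightarrow> complex"
  shows "smooth_on S f \<Longrightarrow> smooth_on S (\<lambda>p. cnj (f p))"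
  by (simp add: smooth_on_iff_smooth_fns[OF S] smooth_fns_cnj)

lemma smooth_on_inverse:
  fixes f :: "'a \<Rightarrow> complex"
  shows "smooth_on S f \<Longrightarrow> (\<And>p. p \<in> S \<Longrightarrow> f p \<noteq> 0) \<Longrightarrow> smooth_on S (\<lambda>p. inverse (f p))"
  by (simp add: smooth_on_iff_smooth_fns[OF S] smooth_fns_inverse)

lemma smooth_on_cong:
  fixes f g :: "'a \<Rightarrow> complex"
  shows "smooth_on S f \<Longrightarrow> (\<And>p. p \<in> S \<Longrightarrow> g p = f p) \<Longrightarrow> smooth_on S g"
  by (simp add: smooth_on_iff_smooth_fns[OF S] smooth_fns_cong)

lemma smooth_on_minus:
  fixes f :: "'a \<Rightarrow> complex"
  shows "smooth_on S f \<Longrightarrow> smooth_on S (\<lambda>p. - f p)"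
  using smooth_on_mult[OF smooth_on_const[of "-1"]] by simp

lemma smooth_on_sum:
  fixes f :: "'i \<Rightarrow> 'a \<Rightarrow> complex"
  shows "finite A \<Longrightarrow> (\<And>i. i \<in> A \<Longrightarrow> smooth_on S (f i)) \<Longrightarrow> smooth_on S (\<lambda>p. \<Sum>i\<in>A. f i p)"
  by (induction A rule: finite_induct) (simp_all add: smooth_on_const smooth_on_add)

lemma smooth_on_prod:
  fixes f :: "'i \<Rightarrow> 'a \<Rightarrow> complex"
  shows "finite A \<Longrightarrow> (\<And>i. i \<in> A \<Longrightarrow> smooth_on S (f i)) \<Longrightarrow> smooth_on S (\<lambda>p. \<Prod>i\<in>A. f i p)"
  by (induction A rule: finite_induct) (simp_all add: smooth_on_const smooth_on_mult)

lemma smooth_on_det: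
  fixes M :: "'a \<Rightarrow> complex^'n^'n"
  shows "(\<And>i j. smooth_on S (\<lambda>p. M p $ i $ j)) \<Longrightarrow> smooth_on S (\<lambda>p. det (M p))"
  unfolding det_def
  by (intro smooth_on_sum smooth_on_mult smooth_on_const smooth_on_prod)
    (simp_all add: finite_permutations)

end

section \<open>Symmetry of second derivatives\<close>

lemma norm_increment_le:
  fixes m :: "real \<Rightarrow> 'a::real_normed_vector"
  assumes t: "0 \<le> t"
    and m: "\<And>s. s \<in> {0..t} \<Longrightarrow> (m has_vector_derivative m' s) (at s)"
    and bound: "\<And>s. s \<in> {0..t} \<Longrightarrow> norm (m' s - L) \<le> e"
  shows "norm (m t - m 0 - t *\<^sub>R L) \<le> t * e"
proof -
  have "((\<lambda>s. m s - s *\<^sub>R L) has_vector_derivative (m' s - L)) (at s)" if "s \<in> {0..t}" for s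
    using has_vector_derivative_diff[OF m[OF that]
        has_vector_derivative_scaleR[OF DERIV_ident has_vector_derivative_const[of L]]]
    by simp
  then have "((\<lambda>s. m s - s *\<^sub>R L) has_derivative (\<lambda>h. h *\<^sub>R (m' s - L))) (at s within {0..t})"
    if "s \<in> {0..t}" for s
    using that unfolding has_vector_derivative_def by (blast intro: has_derivative_at_withinI)
  moreover have "onorm (\<lambda>h. h *\<^sub>R (m' s - L)) \<le> e" if "s \<in> {0..t}" for s
    using bound[OF that] onorm_scaleR_left[OF bounded_linear_ident, of "m' s - L"]
      onorm_id[where 'a=real] by simp
  ultimately have "norm ((m t - t *\<^sub>R L) - (m 0 - 0 *\<^sub>R L)) \<le> e * norm (t - 0)"
    using t by (intro differentiable_bound[where S = "{0..t}"]) auto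
  then show ?thesis
    using t by (simp add: algebra_simps)
qed

lemma second_difference_estimate:
  assumes f: "smooth_on S f" and t: "0 \<le> t"
    and inS: "\<And>s r. s \<in> {0..t} \<Longrightarrow> r \<in> {0..t} \<Longrightarrow> p + s *\<^sub>R u + r *\<^sub>R v \<in> S"
    and close: "\<And>s r. s \<in> {0..t} \<Longrightarrow> r \<in> {0..t} \<Longrightarrow>
                  norm (dderiv v (dderiv u f) (p + s *\<^sub>R u + r *\<^sub>R v) - L) \<le> e"
  shows "norm (f (p + t *\<^sub>R u + t *\<^sub>R v) - f (p + t *\<^sub>R u) - f (p + t *\<^sub>R v) + f p
           - (t * t) *\<^sub>R L) \<le> t * (t * e)"
proof -
  have fu: "smooth_on S (dderiv u f)" by (rule smooth_on_dderiv[OF f])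
  have inner: "norm (dderiv u f (p + s *\<^sub>R u + t *\<^sub>R v) - dderiv u f (p + s *\<^sub>R u) - t *\<^sub>R L)
      \<le> t * e" if s: "s \<in> {0..t}" for s
    using norm_increment_le[OF t has_vector_derivative_dderiv_line close[OF s]]
      smooth_on_imp_differentiable[OF fu inS[OF s]] by simp
  have line: "p + s *\<^sub>R u + t *\<^sub>R v = (p + t *\<^sub>R v) + s *\<^sub>R u" for s
    by (simp add: algebra_simps)
  have "((\<lambda>s. f (p + s *\<^sub>R u + t *\<^sub>R v) - f (p + s *\<^sub>R u)) has_vector_derivative
      dderiv u f (p + s *\<^sub>R u + t *\<^sub>R v) - dderiv u f (p + s *\<^sub>R u)) (at s)"
    if s: "s \<in> {0..t}" for s
  proof -
    have "p + s *\<^sub>R u + t *\<^sub>R v \<in> S" "p + 0 + s *\<^sub>R u \<in> S"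
      using inS[OF s, of t] inS[OF s, of 0] t by auto
    then show ?thesis
      unfolding line using has_vector_derivative_diff[OF
        has_vector_derivative_dderiv_line[of f "p + t *\<^sub>R v" s u]
        has_vector_derivative_dderiv_line[of f p s u]] smooth_on_imp_differentiable[OF f]
      by (simp add: line)
  qed
  from norm_increment_le[OF t this inner]
  show ?thesis by (simp add: algebra_simps)
qed

lemma dist_add_scaleR_le:
  assumes "s \<in> {0..t}" "r \<in> {0..t}"
  shows "dist (p + s *\<^sub>R u + r *\<^sub>R v) p \<le> t * (norm u + norm v)"
proof -
  have "dist (p + s *\<^sub>R u + r *\<^sub>R v) p \<le> s * norm u + r * norm v"
    using assms norm_triangle_ineq[of "s *\<^sub>R u" "r *\<^sub>R v"] by (simp add: dist_norm)
  also have "\<dots> \<le> t * (norm u + norm v)"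
    using assms by (simp add: distrib_left add_mono mult_right_mono)
  finally show ?thesis .
qed

lemma second_difference_tendsto:
  assumes S: "open S" and p: "p \<in> S" and f: "smooth_on S f"
  shows "((\<lambda>t. (f (p + t *\<^sub>R u + t *\<^sub>R v) - f (p + t *\<^sub>R u) - f (p + t *\<^sub>R v) + f p) / of_real (t * t))
           \<longlongrightarrow> dderiv v (dderiv u f) p) (at_right 0)"
proof (rule tendstoI)
  fix e :: real assume e: "0 < e"
  let ?L = "dderiv v (dderiv u f) p"
  have "isCont (dderiv v (dderiv u f)) p"
    using smooth_on_imp_differentiable[OF smooth_on_dderiv[OF smooth_on_dderiv[OF f]] p]
    by (rule differentiable_imp_continuous_within)
  then obtain d1 where d1: "0 < d1" "\<And>y. dist y p < d1 \<Longrightarrow> dist (dderiv v (dderiv u f) y) ?L < e / 2"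
    using e unfolding continuous_at_eps_delta by (metis half_gt_zero)
  obtain d2 where d2: "0 < d2" "ball p d2 \<subseteq> S"
    using S p open_contains_ball by blast
  define B where "B = norm u + norm v + 1"
  have B: "0 < B" unfolding B_def by (simp add: add_nonneg_pos)
  have "\<forall>\<^sub>F t in at_right 0. t \<in> {0<..<min d1 d2 / B}"
    using d1(1) d2(1) B by (intro eventually_at_right_real) simp
  then show "\<forall>\<^sub>F t in at_right 0.
      dist ((f (p + t *\<^sub>R u + t *\<^sub>R v) - f (p + t *\<^sub>R u) - f (p + t *\<^sub>R v) + f p) / of_real (t * t)) ?L < e"
  proof eventually_elim
    case (elim t)
    then have t: "0 < t" "t * B < min d1 d2" using B by (auto simp: field_simps)
    have near: "dist (p + s *\<^sub>R u + r *\<^sub>R v) p < min d1 d2"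
      if "s \<in> {0..t}" "r \<in> {0..t}" for s r
      using dist_add_scaleR_le[OF that, of p u v] t unfolding B_def
      by (simp add: algebra_simps)
    let ?D = "f (p + t *\<^sub>R u + t *\<^sub>R v) - f (p + t *\<^sub>R u) - f (p + t *\<^sub>R v) + f p"
    have "norm (?D - (t * t) *\<^sub>R ?L) \<le> t * (t * (e / 2))"
    proof (rule second_difference_estimate[OF f less_imp_le[OF t(1)]])
      fix s r assume "s \<in> {0..t}" "r \<in> {0..t}"
      from near[OF this] show "p + s *\<^sub>R u + r *\<^sub>R v \<in> S"
        using d2(2) by (auto simp: dist_commute)
      from near[OF \<open>s \<in> _\<close> \<open>r \<in> _\<close>] show "norm (dderiv v (dderiv u f) (p + s *\<^sub>R u + r *\<^sub>R v) - ?L) \<le> e / 2"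
        using d1(2) by (simp add: dist_norm less_imp_le)
    qed
    moreover have "?D / of_real (t * t) - ?L = (?D - (t * t) *\<^sub>R ?L) / of_real (t * t)"
      using t by (simp add: field_simps scaleR_conv_of_real)
    ultimately have "dist (?D / of_real (t * t)) ?L \<le> e / 2"
      using t by (simp add: dist_norm norm_divide norm_mult divide_le_eq mult_ac)
    then show ?case using e by simp
  qed
qed

lemma dderiv_commute:
  assumes "open S" "p \<in> S" "smooth_on S f"
  shows "dderiv v (dderiv u f) p = dderiv u (dderiv v f) p"
proof -
  have "p + t *\<^sub>R v + t *\<^sub>R u = p + t *\<^sub>R u + t *\<^sub>R v" for t
    by (simp add: algebra_simps)
  then have "((\<lambda>t. (f (p + t *\<^sub>R u + t *\<^sub>R v) - f (p + t *\<^sub>R u) - f (p + t *\<^sub>R v) + f p) / of_real (t * t))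
           \<longlongrightarrow> dderiv u (dderiv v f) p) (at_right 0)"
    using second_difference_tendsto[OF assms, of v u] by (simp add: algebra_simps)
  with second_difference_tendsto[OF assms, of u v] show ?thesis
    by (rule tendsto_unique[OF trivial_limit_at_right_real])
qed

section \<open>Wirtinger derivatives\<close>

text \<open>One operator for \<^const>\<open>wirt\<close> and \<^const>\<open>wirt_bar\<close>, so that each rule is proved once.\<close>

definition wirtinger :: "complex \<Rightarrow> 'n option \<Rightarrow> ('n::finite pt \<Rightarrow> complex) \<Rightarrow> 'n pt \<Rightarrow> complex" where
  "wirtinger c k f p = (dderiv (rdir k) f p + c * dderiv (idir k) f p) / 2"

lemma wirt_eq_wirtinger: "wirt k = wirtinger (- \<i>) k"
  by (simp add: fun_eq_iff wirt_def wirtinger_def dderiv_def)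

lemma wirt_bar_eq_wirtinger: "wirt_bar k = wirtinger \<i> k"
  by (simp add: fun_eq_iff wirt_bar_def wirtinger_def dderiv_def)

lemma wirtinger_const: "wirtinger c k (\<lambda>q. a) p = 0"
  by (simp add: wirtinger_def dderiv_const)

lemma wirtinger_add:
  "f differentiable (at p) \<Longrightarrow> g differentiable (at p) \<Longrightarrow>
    wirtinger c k (\<lambda>q. f q + g q) p = wirtinger c k f p + wirtinger c k g p"
  by (simp add: wirtinger_def dderiv_add field_simps)

lemma wirtinger_mult:
  "f differentiable (at p) \<Longrightarrow> g differentiable (at p) \<Longrightarrow>
    wirtinger c k (\<lambda>q. f q * g q) p = f p * wirtinger c k g p + wirtinger c k f p * g p"
  by (simp add: wirtinger_def dderiv_mult field_simps)

lemma wirtinger_minus: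
  "f differentiable (at p) \<Longrightarrow> wirtinger c k (\<lambda>q. - f q) p = - wirtinger c k f p"
  using wirtinger_mult[of "\<lambda>q. -1" p f c k] by (simp add: wirtinger_const)

lemma wirtinger_sum:
  "(\<And>i. i \<in> A \<Longrightarrow> f i differentiable (at p)) \<Longrightarrow>
    wirtinger c k (\<lambda>q. \<Sum>i\<in>A. f i q) p = (\<Sum>i\<in>A. wirtinger c k (f i) p)"
  by (simp add: wirtinger_def dderiv_sum sum_distrib_left sum.distrib flip: sum_divide_distrib)

lemma wirtinger_cnj:
  "f differentiable (at p) \<Longrightarrow> wirtinger c k (\<lambda>q. cnj (f q)) p = cnj (wirtinger (cnj c) k f p)"
  by (simp add: wirtinger_def dderiv_cnj)

lemma wirtinger_sum_mult:
  assumes "\<And>i. i \<in> I \<Longrightarrow> A i differentiable (at p)" "\<And>i. i \<in> I \<Longrightarrow> B i differentiable (at p)"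
  shows "wirtinger c k (\<lambda>q. \<Sum>i\<in>I. A i q * B i q) p
       = (\<Sum>i\<in>I. A i p * wirtinger c k (B i) p + wirtinger c k (A i) p * B i p)"
  using assms by (simp add: wirtinger_sum wirtinger_mult)

lemma wirtinger_None_snd:
  assumes "(\<lambda>q. h (snd q)) differentiable (at p)"
  shows "wirtinger c None (\<lambda>q. h (snd q)) p = 0"
proof -
  have "dderiv w (\<lambda>q. h (snd q)) p = 0" if "snd w = 0" for w
  proof -
    have "((\<lambda>s. h (snd (p + s *\<^sub>R w))) has_vector_derivative dderiv w (\<lambda>q. h (snd q)) p) (at 0)"
      using has_vector_derivative_dderiv_line[of "\<lambda>q. h (snd q)" p 0 w] assms by simp
    moreover have "((\<lambda>s. h (snd (p + s *\<^sub>R w))) has_vector_derivative 0) (at 0)"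
      using that by simp
    ultimately show ?thesis
      by (rule vector_derivative_unique_at)
  qed
  then show ?thesis
    by (simp add: wirtinger_def rdir_def idir_def)
qed

context
  fixes S :: "'n::finite pt set"
  assumes S: "open S"
begin

lemma wirtinger_cong:
  assumes "p \<in> S" "\<And>q. q \<in> S \<Longrightarrow> f q = g q"
  shows "wirtinger c k f p = wirtinger c k g p"
  using dderiv_cong[OF S assms] by (simp add: wirtinger_def)

lemma wirtinger_eq_0: "p \<in> S \<Longrightarrow> (\<And>q. q \<in> S \<Longrightarrow> f q = 0) \<Longrightarrow> wirtinger c k f p = 0"
  using wirtinger_cong[of p f "\<lambda>q. 0"] by (simp add: wirtinger_const)

lemma smooth_on_wirtinger:
  assumes "smooth_on S f"
  shows "smooth_on S (wirtinger c k f)"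
proof -
  have "smooth_on S (\<lambda>p. (dderiv (rdir k) f p + c * dderiv (idir k) f p) * inverse 2)"
    by (intro smooth_on_mult[OF S] smooth_on_add[OF S] smooth_on_const[OF S] smooth_on_dderiv assms)
  then show ?thesis
    unfolding wirtinger_def[abs_def] divide_inverse .
qed

lemma wirtinger_commute:
  assumes f: "smooth_on S f" and p: "p \<in> S"
  shows "wirtinger c k (wirtinger c' l f) p = wirtinger c' l (wirtinger c k f) p"
proof -
  have diff: "dderiv w f differentiable (at p)" for w
    using smooth_on_imp_differentiable[OF smooth_on_dderiv[OF f] p] .
  have expand: "dderiv v (wirtinger c' l f) p
      = (dderiv v (dderiv (rdir l) f) p + c' * dderiv v (dderiv (idir l) f) p) / 2" for v c' l
    unfolding wirtinger_def[abs_def] using diff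
    by (intro dderiv_eq bounded_linear.has_derivative[OF bounded_linear_divide] has_derivative_add
        has_derivative_mult_right has_derivative_dderiv)
  have swap: "dderiv v (dderiv w f) p = dderiv w (dderiv v f) p" for v w
    by (rule dderiv_commute[OF S p f])
  show ?thesis
    unfolding wirtinger_def[of c k "wirtinger c' l f"] wirtinger_def[of c' l "wirtinger c k f"] expand
      swap[of "rdir k"] swap[of "idir k"]
    by (simp add: field_simps)
qed

lemma wirtinger_commute_outer:
  assumes "smooth_on S f" "p \<in> S"
  shows "wirtinger c k (wirtinger c' m (wirtinger c l f)) p = wirtinger c l (wirtinger c' m (wirtinger c k f)) p"
proof -
  have "wirtinger c k (wirtinger c' m (wirtinger c l f)) p = wirtinger c' m (wirtinger c k (wirtinger c l f)) p"
    using assms by (intro wirtinger_commute smooth_on_wirtinger)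
  also have "\<dots> = wirtinger c' m (wirtinger c l (wirtinger c k f)) p"
    using assms by (intro wirtinger_cong[OF _ wirtinger_commute]) auto
  also have "\<dots> = wirtinger c l (wirtinger c' m (wirtinger c k f)) p"
    using assms by (intro wirtinger_commute smooth_on_wirtinger)
  finally show ?thesis .
qed

end

section \<open>Linear algebra\<close>

lemma sum_UNIV_option:
  fixes f :: "'n::finite option \<Rightarrow> 'b::comm_monoid_add"
  shows "(\<Sum>i\<in>UNIV. f i) = f None + (\<Sum>a\<in>UNIV. f (Some a))"
  unfolding UNIV_option_conv by (subst sum.insert) (auto simp: sum.reindex)

lemma det_neq_0_iff_kernel_trivial:
  fixes A :: "'a::field^'n^'n"
  shows "det A \<noteq> 0 \<longleftrightarrow> (\<forall>y. A *v y = 0 \<longrightarrow> y = 0)"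
  by (simp add: invertible_det_nz[symmetric] invertible_left_inverse matrix_left_invertible_ker)

lemma invertible_matrix_inv:
  assumes "invertible A"
  shows "A ** matrix_inv A = mat 1" "matrix_inv A ** A = mat 1"
proof -
  from assms have "\<exists>A'. A ** A' = mat 1 \<and> A' ** A = mat 1"
    unfolding invertible_def .
  from someI_ex[OF this] show "A ** matrix_inv A = mat 1" "matrix_inv A ** A = mat 1"
    unfolding matrix_inv_def by auto
qed

lemma matrix_inv_entry:
  fixes A :: "'a::field^'n^'n"
  assumes "invertible A"
  shows "matrix_inv A $ k $ j = det (\<chi> i l. if l = k then axis j 1 $ i else A $ i $ l) / det A"
proof -
  have "A *v (\<chi> k. matrix_inv A $ k $ j) = axis j 1"
    using arg_cong[OF invertible_matrix_inv(1)[OF assms], of "\<lambda>M. M $ i $ j" for i]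
    by (simp add: vec_eq_iff matrix_vector_mult_def matrix_matrix_mult_def mat_def axis_def)
  then have "(\<chi> k. matrix_inv A $ k $ j) = (\<chi> k. det (\<chi> i l. if l = k then axis j 1 $ i else A $ i $ l) / det A)"
    using cramer assms invertible_det_nz by blast
  from arg_cong[OF this, of "\<lambda>v. v $ k"] show ?thesis
    by simp
qed

lemma smooth_on_matrix_inv:
  fixes M :: "'a::real_normed_vector \<Rightarrow> complex^'n^'n"
  assumes S: "open S" and M: "\<And>i j. smooth_on S (\<lambda>p. M p $ i $ j)"
    and inv: "\<And>p. p \<in> S \<Longrightarrow> invertible (M p)"
  shows "smooth_on S (\<lambda>p. matrix_inv (M p) $ k $ j)"
proof -
  let ?C = "\<lambda>p. (\<chi> i l. if l = k then axis j 1 $ i else M p $ i $ l) :: complex^'n^'n"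
  have "smooth_on S (\<lambda>p. ?C p $ i $ l)" for i l
    by (cases "l = k") (simp_all add: M smooth_on_const[OF S])
  then have "smooth_on S (\<lambda>p. det (?C p) * inverse (det (M p)))"
    using inv invertible_det_nz
    by (intro smooth_on_mult[OF S] smooth_on_inverse[OF S] smooth_on_det[OF S] M) auto
  then show ?thesis
    by (rule smooth_on_cong[OF S]) (simp add: matrix_inv_entry inv divide_inverse)
qed

lemma herm_pos_form_eq_0:
  assumes "herm_pos A" "(\<Sum>i\<in>UNIV. \<Sum>j\<in>UNIV. A $ i $ j * v $ i * cnj (v $ j)) = 0"
  shows "v = 0"
proof (rule ccontr)
  assume "v \<noteq> 0"
  with assms(1) have "Re (\<Sum>i\<in>UNIV. \<Sum>j\<in>UNIV. A $ i $ j * v $ i * cnj (v $ j)) > 0"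
    unfolding herm_pos_def by blast
  with assms(2) show False by simp
qed

lemma herm_pos_kernel:
  assumes "herm_pos A" "A *v z = 0"
  shows "z = 0"
proof -
  define v where "v = (\<chi> i. cnj (z $ i))"
  have "(\<Sum>i\<in>UNIV. \<Sum>j\<in>UNIV. A $ i $ j * v $ i * cnj (v $ j)) = (\<Sum>i\<in>UNIV. v $ i * (A *v z) $ i)"
    by (simp add: v_def matrix_vector_mult_def sum_distrib_left mult_ac)
  also have "\<dots> = 0" using assms(2) by simp
  finally have "v = 0"
    by (rule herm_pos_form_eq_0[OF assms(1)])
  then show "z = 0" by (simp add: vec_eq_iff v_def)
qed

lemma herm_pos_invertible: "herm_pos A \<Longrightarrow> invertible A"
  unfolding invertible_det_nz det_neq_0_iff_kernel_trivial using herm_pos_kernel by blast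

lemma herm_pos_symmetric_conj_square_eq_0:
  fixes G :: "complex^'n::finite^'n" and A :: "'n \<Rightarrow> 'n \<Rightarrow> complex"
  assumes G: "herm_pos G"
    and sym: "\<And>c d. (\<Sum>r\<in>UNIV. G $ r $ d * A c r) = (\<Sum>r\<in>UNIV. G $ r $ c * A d r)"
    and square: "\<And>a r. (\<Sum>c\<in>UNIV. cnj (A a c) * A c r) = 0"
  shows "A c r = 0"
proof -
  let ?v = "\<chi> i. A c i"
  have "(\<Sum>i\<in>UNIV. \<Sum>j\<in>UNIV. G $ i $ j * ?v $ i * cnj (?v $ j))
      = (\<Sum>j\<in>UNIV. (\<Sum>r\<in>UNIV. G $ r $ j * A c r) * cnj (A c j))"
    by (subst sum.swap) (simp add: sum_distrib_right)
  also have "\<dots> = (\<Sum>j\<in>UNIV. (\<Sum>r\<in>UNIV. G $ r $ c * A j r) * cnj (A c j))"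
    by (intro sum.cong refl arg_cong2[where f = times] sym)
  also have "\<dots> = (\<Sum>j\<in>UNIV. \<Sum>r\<in>UNIV. G $ r $ c * (cnj (A c j) * A j r))"
    by (simp add: sum_distrib_left sum_distrib_right mult_ac)
  also have "\<dots> = (\<Sum>r\<in>UNIV. G $ r $ c * (\<Sum>j\<in>UNIV. cnj (A c j) * A j r))"
    by (subst sum.swap) (simp add: sum_distrib_left)
  also have "\<dots> = 0"
    by (simp add: square)
  finally have "?v = 0"
    by (rule herm_pos_form_eq_0[OF G])
  then show ?thesis
    by (simp add: vec_eq_iff)
qed

section \<open>Solutions of the homogeneous complex Monge-Ampere equation\<close>

locale hcma_chart =
  fixes X :: "'n::finite pt set"
    and g0 :: "complex^'n \<Rightarrow> complex^'n^'n" and phi :: "'n pt \<Rightarrow> real"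
  assumes open_X: "open X"
    and smooth_g0: "\<And>a b. smooth_on X (\<lambda>q. g0 (snd q) $ a $ b)"
    and herm_pos_g0: "\<And>q. q \<in> X \<Longrightarrow> herm_pos (g0 (snd q))"
    and kaehler_g0: "\<And>q a b c. q \<in> X \<Longrightarrow>
           wirt (Some c) (\<lambda>q. g0 (snd q) $ a $ b) q = wirt (Some a) (\<lambda>q. g0 (snd q) $ c $ b) q"
    and smooth_phi: "smooth_on X (phic phi)"
    and herm_pos_gmet: "\<And>q. q \<in> X \<Longrightarrow> herm_pos (gmet g0 phi q)"
    and det_cmat: "\<And>q. q \<in> X \<Longrightarrow> det (cmat g0 phi q) = 0"
begin

abbreviation "D \<equiv> wirtinger (- \<i>)"
abbreviation "Dbar \<equiv> wirtinger \<i>"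
abbreviation "\<Phi> \<equiv> phic phi"
abbreviation gref :: "'n \<Rightarrow> 'n \<Rightarrow> 'n pt \<Rightarrow> complex" where "gref a b \<equiv> \<lambda>q. g0 (snd q) $ a $ b"
abbreviation g :: "'n \<Rightarrow> 'n \<Rightarrow> 'n pt \<Rightarrow> complex" where "g a b \<equiv> \<lambda>q. gmet g0 phi q $ a $ b"
abbreviation gi :: "'n \<Rightarrow> 'n \<Rightarrow> 'n pt \<Rightarrow> complex" where "gi a b \<equiv> \<lambda>q. ginv g0 phi q $ a $ b"
abbreviation \<eta> :: "'n \<Rightarrow> 'n pt \<Rightarrow> complex" where "\<eta> a \<equiv> eta g0 phi a"
abbreviation \<eta>bar :: "'n \<Rightarrow> 'n pt \<Rightarrow> complex" where "\<eta>bar a \<equiv> \<lambda>q. cnj (eta g0 phi a q)"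
abbreviation \<psi> :: "'n \<Rightarrow> 'n pt \<Rightarrow> complex" where "\<psi> b \<equiv> D None (Dbar (Some b) \<Phi>)"

lemma g_eq: "g a b q = gref a b q + D (Some a) (Dbar (Some b) \<Phi>) q"
  by (simp add: gmet_def wirt_eq_wirtinger wirt_bar_eq_wirtinger)

lemma eta_eq: "\<eta> a q = - (\<Sum>b\<in>UNIV. gi a b q * \<psi> b q)"
  by (simp add: eta_def wirt_eq_wirtinger wirt_bar_eq_wirtinger)

lemma Dz_eq: "Dz g0 phi f q = D None f q + (\<Sum>c\<in>UNIV. \<eta> c q * D (Some c) f q)"
  by (simp add: Dz_def wirt_eq_wirtinger)

lemma Dzb_eq: "Dzb g0 phi f q = Dbar None f q + (\<Sum>c\<in>UNIV. \<eta>bar c q * Dbar (Some c) f q)"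
  by (simp add: Dzb_def wirt_bar_eq_wirtinger)

lemmas smooth_wirtinger = smooth_on_wirtinger[OF open_X]

lemma smooth_wirtinger_phi: "smooth_on X (wirtinger c k (wirtinger c' l \<Phi>))"
  by (intro smooth_wirtinger smooth_phi)

lemma smooth_g: "smooth_on X (g a b)"
  by (rule smooth_on_cong[OF open_X smooth_on_add[OF open_X smooth_g0 smooth_wirtinger_phi]])
    (simp add: g_eq)

lemma invertible_transpose_gmet: "q \<in> X \<Longrightarrow> invertible (transpose (gmet g0 phi q))"
  using herm_pos_invertible[OF herm_pos_gmet] by (simp add: invertible_det_nz)

lemma ginv_g: "q \<in> X \<Longrightarrow> (\<Sum>b\<in>UNIV. gi a b q * g c b q) = (if a = c then 1 else 0)"
  using arg_cong[OF invertible_matrix_inv(2)[OF invertible_transpose_gmet], where f = "\<lambda>M. M $ a $ c"]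
  by (simp add: ginv_def matrix_matrix_mult_def transpose_def mat_def)

lemma g_ginv: "q \<in> X \<Longrightarrow> (\<Sum>a\<in>UNIV. g a b q * gi a c q) = (if b = c then 1 else 0)"
  using arg_cong[OF invertible_matrix_inv(1)[OF invertible_transpose_gmet], where f = "\<lambda>M. M $ b $ c"]
  by (simp add: ginv_def matrix_matrix_mult_def transpose_def mat_def)

lemma smooth_gi: "smooth_on X (gi a b)"
  unfolding ginv_def
  by (intro smooth_on_matrix_inv[OF open_X] invertible_transpose_gmet)
    (simp_all add: transpose_def smooth_g)

lemma smooth_eta: "smooth_on X (\<eta> a)"
  by (rule smooth_on_cong[OF open_X smooth_on_minus[OF open_X smooth_on_sum[OF open_X]]])
    (simp_all add: eta_eq smooth_on_mult[OF open_X smooth_gi smooth_wirtinger_phi])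

lemma smooth_eta_bar: "smooth_on X (\<eta>bar a)"
  by (rule smooth_on_cnj[OF open_X smooth_eta])

lemma phic_cnj: "(\<lambda>q. cnj (\<Phi> q)) = \<Phi>"
  by (simp add: phic_def fun_eq_iff)

lemma gref_herm: "q \<in> X \<Longrightarrow> gref b a q = cnj (gref a b q)"
  using herm_pos_g0 unfolding herm_pos_def by blast

lemma g_herm: "q \<in> X \<Longrightarrow> g b a q = cnj (g a b q)"
  using herm_pos_gmet unfolding herm_pos_def by blast

lemma wirtinger_z_gref: "q \<in> X \<Longrightarrow> wirtinger c None (gref a b) q = 0"
  by (rule wirtinger_None_snd[OF smooth_on_imp_differentiable[OF smooth_g0]])

lemma Dzb_cong:
  assumes "q \<in> X" "\<And>q'. q' \<in> X \<Longrightarrow> f q' = f' q'"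
  shows "Dzb g0 phi f q = Dzb g0 phi f' q"
  using wirtinger_cong[OF open_X assms] by (simp add: Dzb_eq)

lemma Dzb_minus:
  assumes "f differentiable (at q)"
  shows "Dzb g0 phi (\<lambda>q. - f q) q = - Dzb g0 phi f q"
  using wirtinger_minus[OF assms] by (simp add: Dzb_eq sum_negf)

lemma Dzb_sum_mult:
  assumes "\<And>i. A i differentiable (at q)" "\<And>i. B i differentiable (at q)"
  shows "Dzb g0 phi (\<lambda>q. \<Sum>i\<in>I. A i q * B i q) q
       = (\<Sum>i\<in>I. A i q * Dzb g0 phi (B i) q + Dzb g0 phi (A i) q * B i q)"
proof -
  let ?L = "\<lambda>k i. A i q * Dbar k (B i) q + Dbar k (A i) q * B i q"
  have "Dzb g0 phi (\<lambda>q. \<Sum>i\<in>I. A i q * B i q) q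
      = (\<Sum>i\<in>I. ?L None i) + (\<Sum>c\<in>UNIV. \<Sum>i\<in>I. \<eta>bar c q * ?L (Some c) i)"
    using assms by (simp add: Dzb_eq wirtinger_sum_mult sum_distrib_left)
  also have "\<dots> = (\<Sum>i\<in>I. ?L None i) + (\<Sum>i\<in>I. \<Sum>c\<in>UNIV. \<eta>bar c q * ?L (Some c) i)"
    by (rule arg_cong[where f = "\<lambda>x. _ + x"], rule sum.swap)
  also have "\<dots> = (\<Sum>i\<in>I. ?L None i + (\<Sum>c\<in>UNIV. \<eta>bar c q * ?L (Some c) i))"
    by (simp only: sum.distrib)
  also have "\<dots> = (\<Sum>i\<in>I. A i q * Dzb g0 phi (B i) q + Dzb g0 phi (A i) q * B i q)"
    by (intro sum.cong refl) (simp add: Dzb_eq distrib_left distrib_right sum.distrib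
        sum_distrib_left sum_distrib_right mult.left_commute mult.commute mult.assoc add_ac)
  finally show ?thesis .
qed

lemma psi_eq:
  assumes q: "q \<in> X"
  shows "\<psi> b q = - (\<Sum>a\<in>UNIV. g a b q * \<eta> a q)"
proof -
  have "(\<Sum>a\<in>UNIV. g a b q * \<eta> a q) = - (\<Sum>a\<in>UNIV. \<Sum>c\<in>UNIV. g a b q * gi a c q * \<psi> c q)"
    by (simp add: eta_eq sum_distrib_left sum_negf mult.assoc)
  also have "\<dots> = - (\<Sum>c\<in>UNIV. (\<Sum>a\<in>UNIV. g a b q * gi a c q) * \<psi> c q)"
    by (subst sum.swap) (simp add: sum_distrib_right)
  also have "\<dots> = - (\<Sum>c\<in>UNIV. if b = c then \<psi> c q else 0)"
    by (intro arg_cong[where f = uminus] sum.cong refl) (simp add: g_ginv[OF q])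
  also have "\<dots> = - \<psi> b q"
    by simp
  finally show ?thesis by simp
qed

lemma phi_w_zbar_eq:
  assumes q: "q \<in> X"
  shows "D (Some c) (Dbar None \<Phi>) q = - (\<Sum>a\<in>UNIV. g c a q * \<eta>bar a q)"
proof -
  have "cnj (\<psi> c q) = Dbar None (\<lambda>q. cnj (Dbar (Some c) \<Phi> q)) q"
    by (simp add: wirtinger_cnj smooth_on_imp_differentiable[OF smooth_wirtinger[OF smooth_phi] q])
  also have "\<dots> = Dbar None (D (Some c) \<Phi>) q"
  proof (rule wirtinger_cong[OF open_X q])
    fix q' assume "q' \<in> X"
    show "cnj (Dbar (Some c) \<Phi> q') = D (Some c) \<Phi> q'"
      using wirtinger_cnj[OF smooth_on_imp_differentiable[OF smooth_phi \<open>q' \<in> X\<close>], of "- \<i>" "Some c"]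
      by (simp add: phic_cnj)
  qed
  also have "\<dots> = D (Some c) (Dbar None \<Phi>) q"
    by (rule wirtinger_commute[OF open_X smooth_phi q])
  finally have "D (Some c) (Dbar None \<Phi>) q = cnj (\<psi> c q)" ..
  also have "\<dots> = - (\<Sum>a\<in>UNIV. g c a q * \<eta>bar a q)"
    by (simp add: psi_eq[OF q] g_herm[OF q, of c, symmetric])
  finally show ?thesis .
qed

lemma cmat_mult_vector_Some:
  assumes q: "q \<in> X"
  shows "(cmat g0 phi q *v y) $ Some a = (\<Sum>b\<in>UNIV. g a b q * (y $ Some b - y $ None * \<eta>bar b q))"
proof -
  have "(cmat g0 phi q *v y) $ Some a
      = D (Some a) (Dbar None \<Phi>) q * y $ None + (\<Sum>b\<in>UNIV. g a b q * y $ Some b)"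
    by (simp add: matrix_vector_mult_def sum_UNIV_option cmat_def g_eq wirt_eq_wirtinger
        wirt_bar_eq_wirtinger)
  then show ?thesis
    by (simp add: phi_w_zbar_eq[OF q] right_diff_distrib sum_subtractf sum_distrib_left
        sum_distrib_right mult_ac)
qed

lemma cmat_mult_vector_None:
  "(cmat g0 phi q *v y) $ None
     = y $ None * (D None (Dbar None \<Phi>) q + (\<Sum>b\<in>UNIV. \<psi> b q * \<eta>bar b q))
       + (\<Sum>b\<in>UNIV. \<psi> b q * (y $ Some b - y $ None * \<eta>bar b q))"
  by (simp add: matrix_vector_mult_def sum_UNIV_option cmat_def wirt_eq_wirtinger wirt_bar_eq_wirtinger
      right_diff_distrib distrib_left sum_subtractf sum_distrib_left mult_ac)

text \<open>A kernel vector \<open>y\<close> of \<^const>\<open>cmat\<close> has \<open>y (Some b) = y None * \<eta>bar b\<close>, so \<^const>\<open>cmat\<close> is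
  injective unless the Schur complement below vanishes.\<close>

lemma phi_z_zbar_eq:
  assumes q: "q \<in> X"
  shows "D None (Dbar None \<Phi>) q + (\<Sum>b\<in>UNIV. \<psi> b q * \<eta>bar b q) = 0"
proof (rule ccontr)
  assume nz: "D None (Dbar None \<Phi>) q + (\<Sum>b\<in>UNIV. \<psi> b q * \<eta>bar b q) \<noteq> 0"
  have "y = 0" if y: "cmat g0 phi q *v y = 0" for y
  proof -
    define z where "z = (\<chi> b. y $ Some b - y $ None * \<eta>bar b q)"
    have "(\<Sum>b\<in>UNIV. g a b q * z $ b) = 0" for a
      using cmat_mult_vector_Some[OF q, of y a] y by (simp add: z_def)
    then have "gmet g0 phi q *v z = 0"
      by (simp add: vec_eq_iff matrix_vector_mult_def)
    then have z0: "z = 0"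
      by (rule herm_pos_kernel[OF herm_pos_gmet[OF q]])
    then have y0: "y $ None = 0"
      using arg_cong[OF y, where f = "\<lambda>v. v $ None"] nz
      by (simp add: cmat_mult_vector_None vec_eq_iff z_def)
    show "y = 0"
    proof (subst vec_eq_iff, rule allI)
      fix i show "y $ i = 0 $ i"
        using y0 arg_cong[OF z0, where f = "\<lambda>v. v $ the i"] by (cases i) (simp_all add: z_def)
    qed
  qed
  then have "det (cmat g0 phi q) \<noteq> 0"
    by (simp add: det_neq_0_iff_kernel_trivial)
  with det_cmat[OF q] show False by simp
qed

lemma gref_kaehler_bar:
  assumes q: "q \<in> X"
  shows "Dbar (Some b) (gref c a) q = Dbar (Some a) (gref c b) q"
proof -
  have cnj_gref: "Dbar (Some k) (gref c l) q = cnj (D (Some k) (gref l c) q)" for k l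
  proof -
    have "Dbar (Some k) (gref c l) q = Dbar (Some k) (\<lambda>q. cnj (gref l c q)) q"
      by (rule wirtinger_cong[OF open_X q]) (rule gref_herm)
    also have "\<dots> = cnj (D (Some k) (gref l c) q)"
      using wirtinger_cnj[OF smooth_on_imp_differentiable[OF smooth_g0 q]] by simp
    finally show ?thesis .
  qed
  show ?thesis
    unfolding cnj_gref using kaehler_g0[OF q, where a = a and b = c and c = b]
    by (simp add: wirt_eq_wirtinger)
qed

lemma wirtinger_g:
  "q \<in> X \<Longrightarrow>
    wirtinger c k (g a b) q = wirtinger c k (gref a b) q + wirtinger c k (D (Some a) (Dbar (Some b) \<Phi>)) q"
  using wirtinger_add[OF smooth_on_imp_differentiable[OF smooth_g0]
      smooth_on_imp_differentiable[OF smooth_wirtinger_phi]]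
  by (simp add: g_eq)

lemma g_kaehler:
  assumes q: "q \<in> X"
  shows "D (Some a) (g c d) q = D (Some c) (g a d) q"
  using kaehler_g0[OF q, where a = c and b = d and c = a]
    wirtinger_commute[OF open_X smooth_wirtinger[OF smooth_phi] q, of "- \<i>" "Some a" "- \<i>" "Some c"]
  by (simp add: wirtinger_g[OF q] wirt_eq_wirtinger)

lemma g_kaehler_bar:
  assumes q: "q \<in> X"
  shows "Dbar (Some b) (g c a) q = Dbar (Some a) (g c b) q"
  using gref_kaehler_bar[OF q, of b c a]
    wirtinger_commute_outer[OF open_X smooth_phi q, of \<i> "Some b" "- \<i>" "Some c" "Some a"]
  by (simp add: wirtinger_g[OF q])

lemma Dzb_psi:
  assumes q: "q \<in> X"
  shows "Dzb g0 phi (\<psi> \<beta>) q = - (\<Sum>b\<in>UNIV. \<psi> b q * Dbar (Some \<beta>) (\<eta>bar b) q)"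
proof -
  have d: "(\<lambda>q. \<Sum>b\<in>UNIV. \<psi> b q * \<eta>bar b q) differentiable (at q)"
    using smooth_on_imp_differentiable[OF smooth_wirtinger_phi q]
      smooth_on_imp_differentiable[OF smooth_eta_bar q]
    by (intro differentiable_sum differentiable_mult) auto
  have "0 = Dbar (Some \<beta>) (\<lambda>q. D None (Dbar None \<Phi>) q + (\<Sum>b\<in>UNIV. \<psi> b q * \<eta>bar b q)) q"
    by (rule wirtinger_eq_0[OF open_X q phi_z_zbar_eq, symmetric])
  also have "\<dots> = Dbar (Some \<beta>) (D None (Dbar None \<Phi>)) q
      + (\<Sum>b\<in>UNIV. \<psi> b q * Dbar (Some \<beta>) (\<eta>bar b) q + Dbar (Some \<beta>) (\<psi> b) q * \<eta>bar b q)"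
    using smooth_on_imp_differentiable[OF smooth_wirtinger_phi q]
      smooth_on_imp_differentiable[OF smooth_eta_bar q]
    by (simp add: wirtinger_add[OF smooth_on_imp_differentiable[OF smooth_wirtinger_phi q] d]
        wirtinger_sum_mult)
  finally have zero: "\<dots> = 0" ..
  have "Dzb g0 phi (\<psi> \<beta>) q = Dbar None (\<psi> \<beta>) q + (\<Sum>c\<in>UNIV. \<eta>bar c q * Dbar (Some c) (\<psi> \<beta>) q)"
    by (rule Dzb_eq)
  also have "\<dots> = Dbar (Some \<beta>) (D None (Dbar None \<Phi>)) q
      + (\<Sum>c\<in>UNIV. Dbar (Some \<beta>) (\<psi> c) q * \<eta>bar c q)"
    using wirtinger_commute_outer[OF open_X smooth_phi q, of \<i> None "- \<i>" None "Some \<beta>"]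
      wirtinger_commute_outer[OF open_X smooth_phi q, of \<i> "Some _" "- \<i>" None "Some \<beta>"]
    by (simp add: mult.commute)
  also have "\<dots> = - (\<Sum>b\<in>UNIV. \<psi> b q * Dbar (Some \<beta>) (\<eta>bar b) q)"
    using zero by (simp add: sum.distrib eq_neg_iff_add_eq_0 add_ac)
  finally show ?thesis .
qed

lemma Dzb_g:
  assumes q: "q \<in> X"
  shows "Dzb g0 phi (g c \<beta>) q = - (\<Sum>a\<in>UNIV. g c a q * Dbar (Some \<beta>) (\<eta>bar a) q)"
proof -
  have "Dbar None (g c \<beta>) q = Dbar (Some \<beta>) (D (Some c) (Dbar None \<Phi>)) q"
    using wirtinger_g[OF q, of \<i> None c \<beta>] wirtinger_z_gref[OF q]
      wirtinger_commute_outer[OF open_X smooth_phi q, of \<i> None "- \<i>" "Some c" "Some \<beta>"]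
    by simp
  also have "\<dots> = Dbar (Some \<beta>) (\<lambda>q. - (\<Sum>a\<in>UNIV. g c a q * \<eta>bar a q)) q"
    by (rule wirtinger_cong[OF open_X q]) (rule phi_w_zbar_eq)
  also have "\<dots> = - (\<Sum>a\<in>UNIV. g c a q * Dbar (Some \<beta>) (\<eta>bar a) q + Dbar (Some \<beta>) (g c a) q * \<eta>bar a q)"
    using smooth_on_imp_differentiable[OF smooth_g q] smooth_on_imp_differentiable[OF smooth_eta_bar q]
    by (simp add: wirtinger_minus wirtinger_sum_mult)
  finally have "Dbar None (g c \<beta>) q = \<dots>" .
  moreover have "(\<Sum>a\<in>UNIV. \<eta>bar a q * Dbar (Some a) (g c \<beta>) q) = (\<Sum>a\<in>UNIV. Dbar (Some \<beta>) (g c a) q * \<eta>bar a q)"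
    by (simp add: g_kaehler_bar[OF q, of \<beta> c] mult.commute)
  ultimately show ?thesis
    by (simp add: Dzb_eq sum.distrib)
qed

lemma ginv_contract:
  assumes q: "q \<in> X"
  shows "(\<Sum>d\<in>UNIV. gi r d q * (\<Sum>c\<in>UNIV. g c d q * x c)) = x r"
proof -
  have "(\<Sum>d\<in>UNIV. gi r d q * (\<Sum>c\<in>UNIV. g c d q * x c)) = (\<Sum>c\<in>UNIV. (\<Sum>d\<in>UNIV. gi r d q * g c d q) * x c)"
    by (simp add: sum_distrib_left sum_distrib_right mult.assoc) (rule sum.swap)
  also have "\<dots> = (\<Sum>c\<in>UNIV. if r = c then x c else 0)"
    by (intro sum.cong refl) (simp add: ginv_g[OF q])
  finally show ?thesis by simp
qed

lemma Dzb_eta: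
  assumes q: "q \<in> X"
  shows "Dzb g0 phi (\<eta> r) q = 0"
proof -
  have "(\<Sum>\<gamma>\<in>UNIV. g \<gamma> \<beta> q * Dzb g0 phi (\<eta> \<gamma>) q) = 0" for \<beta>
  proof -
    let ?S = "\<Sum>\<gamma>\<in>UNIV. \<Sum>a\<in>UNIV. g \<gamma> a q * Dbar (Some \<beta>) (\<eta>bar a) q * \<eta> \<gamma> q"
    have "Dzb g0 phi (\<psi> \<beta>) q = Dzb g0 phi (\<lambda>q. - (\<Sum>\<gamma>\<in>UNIV. g \<gamma> \<beta> q * \<eta> \<gamma> q)) q"
      by (rule Dzb_cong[OF q]) (rule psi_eq)
    also have "\<dots> = - (\<Sum>\<gamma>\<in>UNIV. g \<gamma> \<beta> q * Dzb g0 phi (\<eta> \<gamma>) q + Dzb g0 phi (g \<gamma> \<beta>) q * \<eta> \<gamma> q)"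
      using smooth_on_imp_differentiable[OF smooth_g q] smooth_on_imp_differentiable[OF smooth_eta q]
      by (simp add: Dzb_minus Dzb_sum_mult)
    also have "\<dots> = ?S - (\<Sum>\<gamma>\<in>UNIV. g \<gamma> \<beta> q * Dzb g0 phi (\<eta> \<gamma>) q)"
      by (simp add: Dzb_g[OF q] sum_subtractf sum_distrib_right sum_negf)
    finally have "Dzb g0 phi (\<psi> \<beta>) q = \<dots>" .
    moreover have "Dzb g0 phi (\<psi> \<beta>) q = ?S"
      unfolding Dzb_psi[OF q] psi_eq[OF q]
      by (simp add: sum_negf sum_distrib_left sum_distrib_right mult_ac) (rule sum.swap)
    ultimately show ?thesis by simp
  qed
  then show ?thesis
    using ginv_contract[OF q, of r "\<lambda>\<gamma>. Dzb g0 phi (\<eta> \<gamma>) q"] by simp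
qed

lemma Dz_g:
  assumes q: "q \<in> X"
  shows "Dz g0 phi (g a d) q = - (\<Sum>c\<in>UNIV. g c d q * D (Some a) (\<eta> c) q)"
proof -
  have "D None (g a d) q = D (Some a) (\<psi> d) q"
    using wirtinger_g[OF q, of "- \<i>" None a d] wirtinger_z_gref[OF q]
      wirtinger_commute[OF open_X smooth_wirtinger[OF smooth_phi] q, of "- \<i>" None "- \<i>" "Some a"]
    by simp
  also have "\<dots> = D (Some a) (\<lambda>q. - (\<Sum>c\<in>UNIV. g c d q * \<eta> c q)) q"
    by (rule wirtinger_cong[OF open_X q]) (rule psi_eq)
  also have "\<dots> = - (\<Sum>c\<in>UNIV. g c d q * D (Some a) (\<eta> c) q + D (Some a) (g c d) q * \<eta> c q)"
    using smooth_on_imp_differentiable[OF smooth_g q] smooth_on_imp_differentiable[OF smooth_eta q]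
    by (simp add: wirtinger_minus wirtinger_sum_mult)
  finally have "D None (g a d) q = \<dots>" .
  moreover have "(\<Sum>c\<in>UNIV. \<eta> c q * D (Some c) (g a d) q) = (\<Sum>c\<in>UNIV. D (Some a) (g c d) q * \<eta> c q)"
    by (simp add: g_kaehler[OF q, of a] mult.commute)
  ultimately show ?thesis
    by (simp add: Dz_eq sum.distrib)
qed

lemma curv_eq:
  assumes q: "q \<in> X"
  shows "curv g0 phi r a q = - (\<Sum>c\<in>UNIV. cnj (Dbar (Some a) (\<eta> c) q) * Dbar (Some c) (\<eta> r) q)"
proof -
  have dD: "D k (\<eta> c) differentiable (at q)" "Dbar k (\<eta> c) differentiable (at q)" for k c
    using smooth_on_imp_differentiable[OF smooth_wirtinger[OF smooth_eta] q] by auto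
  have "curv g0 phi r a q = - Dzb g0 phi (\<lambda>q. - D (Some a) (\<eta> r) q) q"
    unfolding curv_def
    by (intro arg_cong[where f = uminus] Dzb_cong[OF q])
      (simp add: Dz_g ginv_contract[where x = "\<lambda>c. D (Some a) (\<eta> c) _"] sum_negf)
  also have "\<dots> = Dzb g0 phi (D (Some a) (\<eta> r)) q"
    by (simp add: Dzb_minus[OF dD(1)])
  also have "\<dots> = D (Some a) (Dbar None (\<eta> r)) q + (\<Sum>c\<in>UNIV. \<eta>bar c q * D (Some a) (Dbar (Some c) (\<eta> r)) q)"
    using wirtinger_commute[OF open_X smooth_eta q, of \<i> _ "- \<i>" "Some a"]
    by (simp add: Dzb_eq)
  also have "\<dots> = - (\<Sum>c\<in>UNIV. D (Some a) (\<eta>bar c) q * Dbar (Some c) (\<eta> r) q)"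
  proof -
    have "0 = D (Some a) (\<lambda>q. Dbar None (\<eta> r) q + (\<Sum>c\<in>UNIV. \<eta>bar c q * Dbar (Some c) (\<eta> r) q)) q"
      by (rule wirtinger_eq_0[OF open_X q, symmetric]) (simp add: Dzb_eta[unfolded Dzb_eq])
    also have "\<dots> = D (Some a) (Dbar None (\<eta> r)) q
        + (\<Sum>c\<in>UNIV. \<eta>bar c q * D (Some a) (Dbar (Some c) (\<eta> r)) q + D (Some a) (\<eta>bar c) q * Dbar (Some c) (\<eta> r) q)"
      using smooth_on_imp_differentiable[OF smooth_eta_bar q] dD
      by (simp add: wirtinger_add differentiable_sum differentiable_mult wirtinger_sum_mult)
    finally show ?thesis
      by (simp add: sum.distrib eq_neg_iff_add_eq_0 add_ac)
  qed
  also have "\<dots> = - (\<Sum>c\<in>UNIV. cnj (Dbar (Some a) (\<eta> c) q) * Dbar (Some c) (\<eta> r) q)"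
    using wirtinger_cnj[OF smooth_on_imp_differentiable[OF smooth_eta q]] by simp
  finally show ?thesis .
qed

lemma Dbar_eta_symmetric:
  assumes q: "q \<in> X"
  shows "(\<Sum>r\<in>UNIV. g r d q * Dbar (Some c) (\<eta> r) q) = (\<Sum>r\<in>UNIV. g r c q * Dbar (Some d) (\<eta> r) q)"
proof -
  have Dbar_psi: "Dbar (Some c) (\<psi> d) q
      = - (\<Sum>r\<in>UNIV. g r d q * Dbar (Some c) (\<eta> r) q) - (\<Sum>r\<in>UNIV. Dbar (Some c) (g r d) q * \<eta> r q)"
    for c d
  proof -
    have "Dbar (Some c) (\<psi> d) q = Dbar (Some c) (\<lambda>q. - (\<Sum>r\<in>UNIV. g r d q * \<eta> r q)) q"
      by (rule wirtinger_cong[OF open_X q]) (rule psi_eq)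
    then show ?thesis
      using smooth_on_imp_differentiable[OF smooth_g q] smooth_on_imp_differentiable[OF smooth_eta q]
      by (simp add: wirtinger_minus wirtinger_sum_mult sum.distrib)
  qed
  have "Dbar (Some c) (\<psi> d) q = Dbar (Some d) (\<psi> c) q"
    by (rule wirtinger_commute_outer[OF open_X smooth_phi q])
  then show ?thesis
    unfolding Dbar_psi g_kaehler_bar[OF q, of c _ d] by simp
qed

lemma curv_eq_0_iff:
  assumes q: "q \<in> X"
  shows "(\<forall>r a. curv g0 phi r a q = 0) \<longleftrightarrow> (\<forall>a b. wirt_bar (Some b) (eta g0 phi a) q = 0)"
proof
  assume curv: "\<forall>r a. curv g0 phi r a q = 0"
  have "Dbar (Some b) (\<eta> a) q = 0" for a b
  proof (rule herm_pos_symmetric_conj_square_eq_0[where A = "\<lambda>c r. Dbar (Some c) (\<eta> r) q"])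
    show "herm_pos (gmet g0 phi q)"
      by (rule herm_pos_gmet[OF q])
    show "(\<Sum>r\<in>UNIV. gmet g0 phi q $ r $ d * Dbar (Some c) (\<eta> r) q)
        = (\<Sum>r\<in>UNIV. gmet g0 phi q $ r $ c * Dbar (Some d) (\<eta> r) q)" for c d
      by (rule Dbar_eta_symmetric[OF q])
    show "(\<Sum>c\<in>UNIV. cnj (Dbar (Some a') (\<eta> c) q) * Dbar (Some c) (\<eta> r) q) = 0" for a' r
      using curv curv_eq[OF q, of r a'] by simp
  qed
  then show "\<forall>a b. wirt_bar (Some b) (eta g0 phi a) q = 0"
    by (simp add: wirt_bar_eq_wirtinger)
next
  assume "\<forall>a b. wirt_bar (Some b) (eta g0 phi a) q = 0"
  then show "\<forall>r a. curv g0 phi r a q = 0"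
    by (simp add: curv_eq[OF q] wirt_bar_eq_wirtinger)
qed

end

theorem theorem4p2p7:
  fixes Sig :: "complex set" and U :: "(complex^'n::finite) set"
    and g0 :: "complex^'n \<Rightarrow> complex^'n^'n" and phi :: "'n pt \<Rightarrow> real"
  assumes "open Sig" and "connected Sig" and "open U"
    and "\<forall>a b. smooth_on (Sig \<times> U) (\<lambda>q. g0 (snd q) $ a $ b)"
    and "\<forall>w\<in>U. herm_pos (g0 w)"
    and "\<forall>p\<in>Sig \<times> U. \<forall>a b c.
           wirt (Some c) (\<lambda>q. g0 (snd q) $ a $ b) p = wirt (Some a) (\<lambda>q. g0 (snd q) $ c $ b) p"
    and "smooth_on (Sig \<times> U) (phic phi)"
    and "\<forall>p\<in>Sig \<times> U. herm_pos (gmet g0 phi p)"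
    and "\<forall>p\<in>Sig \<times> U. det (cmat g0 phi p) = 0"
  shows "(\<forall>p\<in>Sig \<times> U. \<forall>r a. curv g0 phi r a p = 0) \<longleftrightarrow>
         (\<forall>p\<in>Sig \<times> U. \<forall>a b. wirt_bar (Some b) (eta g0 phi a) p = 0)"
proof -
  \<comment> \<open>The equivalence holds pointwise.\<close>
  interpret hcma_chart "Sig \<times> U" g0 phi
    using assms by unfold_locales (auto simp: open_Times mem_Times_iff)
  show ?thesis
    using curv_eq_0_iff by blast
qed

end
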